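(* Assume the setting described in the context. Let $\limsup_{\epsilon\to0}\mathcal D_{di}(\epsilon,y_0,z_0)$ denote the set of all $\gamma\in\mathcal P(U\times Y\times Z)$ for which there exist $\epsilon_k\to0$ ($\epsilon_k>0$) and $\gamma_k\in\mathcal D_{di}(\epsilon_k,y_0,z_0)$ with $\gamma_k\to\gamma$ weak$^*$. Then $$\limsup_{\epsilon\to0}\mathcal D_{di}(\epsilon,y_0,z_0)\subset\mathcal D^{\mathcal A}_{di}(z_0)\qquad\text{and}\qquad \liminf_{\epsilon\to0}G^*_{di}(\epsilon,y_0,z_0)\ \ge\ G^{\mathcal A}_{di}(z_0).$$
   Context: Let $U$ be a compact metric space, $Y\subset\mathbb R^m$ and $Z\subset\mathbb R^n$ compact sets, $f:U\times\mathbb R^m\times\mathbb R^n\to\mathbb R^m$ and $g:U\times\mathbb R^m\times\mathbb R^n\to\mathbb R^n$ continuous and Lipschitz in $(y,z)$, $G:U\times\mathbb R^m\times\mathbb R^n\to\mathbb R$ continuous, $C>0$, $(y_0,z_0)\in Y\times Z$. For a compact metric space $W$, $\mathcal P(W)$ denotes the Borel probability measures on $W$ with the weak$^*$ topology. For $\epsilon>0$ put $\chi_\epsilon(u,y,z)^T=(\tfrac1\epsilon f(u,y,z)^T,\ g(u,y,z)^T)$ and $$\mathcal D_{di}(\epsilon,y_0,z_0)=\Big\{\gamma\in\mathcal P(U\times Y\times Z):\int[\nabla(\phi(y)\psi(z))^T\chi_\epsilon(u,y,z)+C(\phi(y_0)\psi(z_0)-\phi(y)\psi(z))]\gamma(du,dy,dz)=0\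 \ \forall\phi\in C^1(\mathbb R^m),\forall\psi\in C^1(\mathbb R^n)\Big\},$$ $G^*_{di}(\epsilon,y_0,z_0)=\min_{\gamma\in\mathcal D_{di}(\epsilon,y_0,z_0)}\int G\,d\gamma$. Further $\mathcal D=\{\gamma\in\mathcal P(U\times Y\times Z):\int\psi(z)\nabla\phi(y)^Tf(u,y,z)\gamma(du,dy,dz)=0\ \forall\phi\in C^1(\mathbb R^m),\forall\psi\in C^1(\mathbb R^n)\}$, $\mathcal A_{di}(z_0)=\{\gamma\in\mathcal P(U\times Y\times Z):\int[\nabla\psi(z)^Tg(u,y,z)+C(\psi(z_0)-\psi(z))]\gamma(du,dy,dz)=0\ \forall\psi\in C^1(\mathbb R^n)\}$, $\mathcal D^{\mathcal A}_{di}(z_0)=\mathcal D\cap\mathcal A_{di}(z_0)$ and $G^{\mathcal A}_{di}(z_0)=\min_{\gamma\in\mathcal D^{\mathcal A}_{di}(z_0)}\int G\,d\gamma$ (the augmented reduced problem). *)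

theory Defs
  imports "HOL-Probability.Probability"
begin


definition C1_fun :: "('a::euclidean_space \<Rightarrow> real) \<Rightarrow> bool" where
  "C1_fun \<phi> \<longleftrightarrow> \<phi> differentiable_on UNIV \<and>
     (\<forall>v. continuous_on UNIV (\<lambda>y. frechet_derivative \<phi> (at y) v))"

definition probs :: "'a::topological_space set \<Rightarrow> 'a measure set" where
  "probs K = {\<gamma>. prob_space \<gamma> \<and> sets \<gamma> = sets (restrict_space borel K)}"

definition weak_star_conv :: "'a::topological_space set \<Rightarrow> (nat \<Rightarrow> 'a measure) \<Rightarrow> 'a measure \<Rightarrow> bool" where
  "weak_star_conv K \<gamma>s \<gamma> \<longleftrightarrow>
     (\<forall>h::'a \<Rightarrow> real. continuous_on K h \<longrightarrow>
        (\<lambda>k. integral\<^sup>L (\<gamma>s k) h) \<longlonglongrightarrow> integral\<^sup>L \<gamma> h)"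

definition D_di ::
  "'u::metric_space set \<Rightarrow> (real^'m) set \<Rightarrow> (real^'n) set
   \<Rightarrow> ('u \<Rightarrow> real^'m \<Rightarrow> real^'n \<Rightarrow> real^'m) \<Rightarrow> ('u \<Rightarrow> real^'m \<Rightarrow> real^'n \<Rightarrow> real^'n)
   \<Rightarrow> real \<Rightarrow> real \<Rightarrow> real^'m \<Rightarrow> real^'n \<Rightarrow> ('u \<times> (real^'m) \<times> (real^'n)) measure set" where
  "D_di U Y Z f g C \<epsilon> y0 z0 = {\<gamma> \<in> probs (U \<times> Y \<times> Z).
     \<forall>\<phi> \<psi>. C1_fun \<phi> \<longrightarrow> C1_fun \<psi> \<longrightarrow>
       integral\<^sup>L \<gamma> (\<lambda>(u,y,z).
          frechet_derivative (\<lambda>(y',z'). \<phi> y' * \<psi> z') (at (y,z))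
             (scaleR (1/\<epsilon>) (f u y z), g u y z)
          + C * (\<phi> y0 * \<psi> z0 - \<phi> y * \<psi> z)) = 0}"

definition G_di_star ::
  "'u::metric_space set \<Rightarrow> (real^'m) set \<Rightarrow> (real^'n) set
   \<Rightarrow> ('u \<Rightarrow> real^'m \<Rightarrow> real^'n \<Rightarrow> real^'m) \<Rightarrow> ('u \<Rightarrow> real^'m \<Rightarrow> real^'n \<Rightarrow> real^'n)
   \<Rightarrow> ('u \<Rightarrow> real^'m \<Rightarrow> real^'n \<Rightarrow> real)
   \<Rightarrow> real \<Rightarrow> real \<Rightarrow> real^'m \<Rightarrow> real^'n \<Rightarrow> ereal" where
  "G_di_star U Y Z f g G C \<epsilon> y0 z0 =
     (INF \<gamma>\<in>D_di U Y Z f g C \<epsilon> y0 z0. ereal (integral\<^sup>L \<gamma> (\<lambda>(u,y,z). G u y z)))"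

definition D_set ::
  "'u::metric_space set \<Rightarrow> (real^'m) set \<Rightarrow> (real^'n) set
   \<Rightarrow> ('u \<Rightarrow> real^'m \<Rightarrow> real^'n \<Rightarrow> real^'m) \<Rightarrow> ('u \<times> (real^'m) \<times> (real^'n)) measure set" where
  "D_set U Y Z f = {\<gamma> \<in> probs (U \<times> Y \<times> Z).
     \<forall>(\<phi>::real^'m \<Rightarrow> real) (\<psi>::real^'n \<Rightarrow> real). C1_fun \<phi> \<longrightarrow> C1_fun \<psi> \<longrightarrow>
       integral\<^sup>L \<gamma> (\<lambda>(u,y,z). \<psi> z * frechet_derivative \<phi> (at y) (f u y z)) = 0}"

definition A_di ::
  "'u::metric_space set \<Rightarrow> (real^'m) set \<Rightarrow> (real^'n) set
   \<Rightarrow> ('u \<Rightarrow> real^'m \<Rightarrow> real^'n \<Rightarrow> real^'n) \<Rightarrow> real \<Rightarrow> real^'n \<Rightarrow> ('u \<times> (real^'m) \<times> (real^'n)) measure set" where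
  "A_di U Y Z g C z0 = {\<gamma> \<in> probs (U \<times> Y \<times> Z).
     \<forall>\<psi>::real^'n \<Rightarrow> real. C1_fun \<psi> \<longrightarrow>
       integral\<^sup>L \<gamma> (\<lambda>(u,y,z). frechet_derivative \<psi> (at z) (g u y z) + C * (\<psi> z0 - \<psi> z)) = 0}"

definition G_di_A ::
  "'u::metric_space set \<Rightarrow> (real^'m) set \<Rightarrow> (real^'n) set
   \<Rightarrow> ('u \<Rightarrow> real^'m \<Rightarrow> real^'n \<Rightarrow> real^'m) \<Rightarrow> ('u \<Rightarrow> real^'m \<Rightarrow> real^'n \<Rightarrow> real^'n)
   \<Rightarrow> ('u \<Rightarrow> real^'m \<Rightarrow> real^'n \<Rightarrow> real) \<Rightarrow> real \<Rightarrow> real^'n \<Rightarrow> ereal" where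
  "G_di_A U Y Z f g G C z0 =
     (INF \<gamma>\<in>D_set U Y Z f \<inter> A_di U Y Z g C z0. ereal (integral\<^sup>L \<gamma> (\<lambda>(u,y,z). G u y z)))"

definition limsup_D_di ::
  "'u::metric_space set \<Rightarrow> (real^'m) set \<Rightarrow> (real^'n) set
   \<Rightarrow> ('u \<Rightarrow> real^'m \<Rightarrow> real^'n \<Rightarrow> real^'m) \<Rightarrow> ('u \<Rightarrow> real^'m \<Rightarrow> real^'n \<Rightarrow> real^'n)
   \<Rightarrow> real \<Rightarrow> real^'m \<Rightarrow> real^'n \<Rightarrow> ('u \<times> (real^'m) \<times> (real^'n)) measure set" where
  "limsup_D_di U Y Z f g C y0 z0 = {\<gamma> \<in> probs (U \<times> Y \<times> Z).
     \<exists>\<epsilon>s \<gamma>s. (\<forall>k. \<epsilon>s k > 0) \<and> \<epsilon>s \<longlonglongrightarrow> 0 \<and>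
       (\<forall>k. \<gamma>s k \<in> D_di U Y Z f g C (\<epsilon>s k) y0 z0) \<and> weak_star_conv (U \<times> Y \<times> Z) \<gamma>s \<gamma>}"

end

theory Submission
  imports Defs
begin

text \<open>
Testing a measure \<open>\<gamma> \<in> D_di(\<epsilon>)\<close> against \<open>\<phi>(y) \<psi>(z)\<close> splits its defining equation into
\<open>1/\<epsilon>\<close> times \<open>\<integral> \<psi> \<nabla>\<phi>\<^sup>T f d\<gamma>\<close> plus a term that stays bounded; multiplying by \<open>\<epsilon>\<close> and
passing to a weak* limit gives the equations of \<open>D\<close>.  Taking \<open>\<phi> = 1\<close> shows
\<open>D_di(\<epsilon>) \<subseteq> A_di(z0)\<close> for every \<open>\<epsilon>\<close>, and \<open>A_di(z0)\<close> is weak* closed.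

For the inequality pick \<open>\<epsilon>\<^sub>k \<rightarrow> 0\<close> along which \<open>G*_di\<close> stays below a level \<open>\<rho>\<close> and nearly
optimal \<open>\<gamma>\<^sub>k\<close>.  Borel probability measures on a compact metric space are sequentially weak*
compact: a Borel map into \<open>[0,1]\<close> with uniformly continuous inverse on its image (ternary
digits recording membership in a separating sequence of open sets) reduces this to Helly's
selection theorem on the real line.  A limit point of the \<open>\<gamma>\<^sub>k\<close> then lies in
\<open>limsup D_di \<subseteq> D \<inter> A_di(z0)\<close>, and its cost is at most \<open>\<rho>\<close>.
\<close>

lemma C1_fun_has_derivative:
  assumes "C1_fun \<phi>"
  shows "(\<phi> has_derivative frechet_derivative \<phi> (at y)) (at y)"
  using assms unfolding C1_fun_def
  by (meson UNIV_I differentiable_on_def frechet_derivative_works)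

lemma C1_fun_continuous_on: "C1_fun \<phi> \<Longrightarrow> continuous_on UNIV \<phi>"
  unfolding C1_fun_def using differentiable_imp_continuous_on by blast

lemma linear_frechet_derivative_C1: "C1_fun \<phi> \<Longrightarrow> linear (frechet_derivative \<phi> (at y))"
  using C1_fun_has_derivative has_derivative_linear by blast

lemma continuous_on_C1_fun_compose:
  "C1_fun \<phi> \<Longrightarrow> continuous_on S p \<Longrightarrow> continuous_on S (\<lambda>x. \<phi> (p x))"
  using continuous_on_compose2[OF C1_fun_continuous_on] by blast

lemma C1_fun_const: "C1_fun (\<lambda>_. c)"
  unfolding C1_fun_def by simp

lemma frechet_derivative_tensor_product:
  fixes \<phi> :: "'a::euclidean_space \<Rightarrow> real" and \<psi> :: "'b::euclidean_space \<Rightarrow> real"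
  assumes "C1_fun \<phi>" "C1_fun \<psi>"
  shows "frechet_derivative (\<lambda>(y',z'). \<phi> y' * \<psi> z') (at (y,z)) (a,b) =
     frechet_derivative \<phi> (at y) a * \<psi> z + \<phi> y * frechet_derivative \<psi> (at z) b"
proof -
  have "((\<lambda>(y',z'). \<phi> y' * \<psi> z') has_derivative
      (\<lambda>(a,b). \<phi> y * frechet_derivative \<psi> (at z) b + frechet_derivative \<phi> (at y) a * \<psi> z)) (at (y,z))"
    using has_derivative_mult[OF
        has_derivative_compose[OF has_derivative_fst[OF has_derivative_ident, of "at (y,z)"]
          C1_fun_has_derivative[OF assms(1)]]
        has_derivative_compose[OF has_derivative_snd[OF has_derivative_ident, of "at (y,z)"]
          C1_fun_has_derivative[OF assms(2)]]]
    by (simp add: case_prod_beta')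
  from fun_cong[OF frechet_derivative_at[OF this], of "(a,b)"] show ?thesis
    by (simp only: case_prod_conv)
qed

lemma continuous_on_frechet_derivative_C1:
  fixes \<phi> :: "'a::euclidean_space \<Rightarrow> real"
  assumes "C1_fun \<phi>" "continuous_on S p" "continuous_on S q"
  shows "continuous_on S (\<lambda>x. frechet_derivative \<phi> (at (p x)) (q x))"
proof -
  have basis_expansion:
    "frechet_derivative \<phi> (at y) v = (\<Sum>b\<in>Basis. (v \<bullet> b) * frechet_derivative \<phi> (at y) b)" for y v
  proof -
    note l = linear_frechet_derivative_C1[OF assms(1), of y]
    have "frechet_derivative \<phi> (at y) v = frechet_derivative \<phi> (at y) (\<Sum>b\<in>Basis. (v \<bullet> b) *\<^sub>R b)"
      by (simp only: euclidean_representation)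
    then show ?thesis by (simp only: linear_sum[OF l] linear_scale[OF l] real_scaleR_def)
  qed
  have "continuous_on S (\<lambda>x. frechet_derivative \<phi> (at (p x)) b)" for b
    using continuous_on_compose2[OF _ assms(2)] assms(1) unfolding C1_fun_def by blast
  then have "continuous_on S (\<lambda>x. \<Sum>b\<in>Basis. (q x \<bullet> b) * frechet_derivative \<phi> (at (p x)) b)"
    by (intro continuous_on_sum continuous_on_mult[OF continuous_on_inner[OF assms(3) continuous_on_const]])
  then show ?thesis by (subst basis_expansion)
qed

lemma space_probs: "\<gamma> \<in> probs K \<Longrightarrow> space \<gamma> = K"
  unfolding probs_def using sets_eq_imp_space_eq[of \<gamma> "restrict_space borel K"]
  by (auto simp: space_restrict_space)

lemma prob_space_probs: "\<gamma> \<in> probs K \<Longrightarrow> prob_space \<gamma>"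
  unfolding probs_def by auto

lemma measurable_probs: "\<gamma> \<in> probs K \<Longrightarrow> measurable \<gamma> N = measurable (restrict_space borel K) N"
  unfolding probs_def by (auto intro: measurable_cong_sets)

lemma integrable_probs_continuous:
  fixes F :: "'a::metric_space \<Rightarrow> real"
  assumes "\<gamma> \<in> probs K" "compact K" "continuous_on K F"
  shows "integrable \<gamma> F"
proof -
  interpret prob_space \<gamma> using prob_space_probs[OF assms(1)] .
  obtain B where B: "\<forall>x\<in>K. norm (F x) \<le> B"
    using compact_imp_bounded[OF compact_continuous_image[OF assms(3,2)]] unfolding bounded_iff by auto
  have "AE x in \<gamma>. norm (F x) \<le> B"
    using B by (intro AE_I2) (simp add: space_probs[OF assms(1)])
  moreover have "F \<in> borel_measurable \<gamma>"
    unfolding measurable_probs[OF assms(1)] by (rule borel_measurable_continuous_on_restrict[OF assms(3)])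
  ultimately show ?thesis by (rule integrable_const_bound)
qed

lemma weak_star_conv_integral_limit:
  fixes F :: "'a::topological_space \<Rightarrow> real"
  assumes "weak_star_conv K \<gamma>s \<gamma>" "continuous_on K F" "(\<lambda>k. integral\<^sup>L (\<gamma>s k) F) \<longlonglongrightarrow> l"
  shows "integral\<^sup>L \<gamma> F = l"
proof -
  have "(\<lambda>k. integral\<^sup>L (\<gamma>s k) F) \<longlonglongrightarrow> integral\<^sup>L \<gamma> F"
    using assms(1,2) unfolding weak_star_conv_def by simp
  then show ?thesis using assms(3) by (rule LIMSEQ_unique)
qed

lemma D_di_subset_A_di: "D_di U Y Z f g C \<epsilon> y0 z0 \<subseteq> A_di U Y Z g C z0"
proof
  fix \<gamma> assume \<gamma>: "\<gamma> \<in> D_di U Y Z f g C \<epsilon> y0 z0"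
  have slow: "integral\<^sup>L \<gamma> (\<lambda>(u,y,z). frechet_derivative \<psi> (at z) (g u y z) + C * (\<psi> z0 - \<psi> z)) = 0"
    if \<psi>: "C1_fun \<psi>" for \<psi>
  proof -
    from \<gamma> have "\<forall>\<phi> \<psi>. C1_fun \<phi> \<longrightarrow> C1_fun \<psi> \<longrightarrow> integral\<^sup>L \<gamma> (\<lambda>(u,y,z).
          frechet_derivative (\<lambda>(y',z'). \<phi> y' * \<psi> z') (at (y,z)) (scaleR (1/\<epsilon>) (f u y z), g u y z)
          + C * (\<phi> y0 * \<psi> z0 - \<phi> y * \<psi> z)) = 0"
      unfolding D_di_def mem_Collect_eq by (rule conjunct2)
    from this[rule_format, OF C1_fun_const[of 1] \<psi>] show ?thesis
      unfolding frechet_derivative_tensor_product[OF C1_fun_const \<psi>] by simp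
  qed
  show "\<gamma> \<in> A_di U Y Z g C z0"
    unfolding A_di_def mem_Collect_eq
  proof (intro conjI allI impI slow)
    show "\<gamma> \<in> probs (U \<times> Y \<times> Z)"
      using \<gamma> unfolding D_di_def mem_Collect_eq by (rule conjunct1)
  qed
qed

lemma D_di_fast_integral:
  fixes U :: "'u::metric_space set" and Y :: "(real^'m) set" and Z :: "(real^'n) set"
    and f :: "'u \<Rightarrow> real^'m \<Rightarrow> real^'n \<Rightarrow> real^'m"
    and g :: "'u \<Rightarrow> real^'m \<Rightarrow> real^'n \<Rightarrow> real^'n"
  assumes K: "compact (U \<times> Y \<times> Z)"
    and fc: "continuous_on (U \<times> Y \<times> Z) (\<lambda>(u,y,z). f u y z)"
    and gc: "continuous_on (U \<times> Y \<times> Z) (\<lambda>(u,y,z). g u y z)"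
    and \<gamma>: "\<gamma> \<in> D_di U Y Z f g C \<epsilon> y0 z0" and "\<epsilon> \<noteq> 0"
    and \<phi>: "C1_fun \<phi>" and \<psi>: "C1_fun \<psi>"
  shows "integral\<^sup>L \<gamma> (\<lambda>(u,y,z). \<psi> z * frechet_derivative \<phi> (at y) (f u y z)) =
    - \<epsilon> * integral\<^sup>L \<gamma> (\<lambda>(u,y,z). \<phi> y * frechet_derivative \<psi> (at z) (g u y z)
                               + C * (\<phi> y0 * \<psi> z0 - \<phi> y * \<psi> z))"
    (is "integral\<^sup>L \<gamma> ?fast = - \<epsilon> * integral\<^sup>L \<gamma> ?slow")
proof -
  have \<gamma>K: "\<gamma> \<in> probs (U \<times> Y \<times> Z)" and
    "integral\<^sup>L \<gamma> (\<lambda>(u,y,z).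
       frechet_derivative (\<lambda>(y',z'). \<phi> y' * \<psi> z') (at (y,z)) (scaleR (1/\<epsilon>) (f u y z), g u y z)
       + C * (\<phi> y0 * \<psi> z0 - \<phi> y * \<psi> z)) = 0"
    using \<gamma> \<phi> \<psi> unfolding D_di_def by blast+
  moreover have "(\<lambda>(u,y,z).
       frechet_derivative (\<lambda>(y',z'). \<phi> y' * \<psi> z') (at (y,z)) (scaleR (1/\<epsilon>) (f u y z), g u y z)
       + C * (\<phi> y0 * \<psi> z0 - \<phi> y * \<psi> z)) = (\<lambda>x. (1/\<epsilon>) * ?fast x + ?slow x)"
    by (auto simp: fun_eq_iff frechet_derivative_tensor_product[OF \<phi> \<psi>]
        linear_scale[OF linear_frechet_derivative_C1[OF \<phi>]] algebra_simps)
  moreover have "integrable \<gamma> ?fast" "integrable \<gamma> ?slow"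
    using fc gc unfolding case_prod_beta
    by (auto intro!: integrable_probs_continuous[OF \<gamma>K K] continuous_intros
        continuous_on_C1_fun_compose[OF \<phi>] continuous_on_C1_fun_compose[OF \<psi>]
        continuous_on_frechet_derivative_C1[OF \<phi>] continuous_on_frechet_derivative_C1[OF \<psi>])
  ultimately have "(1/\<epsilon>) * integral\<^sup>L \<gamma> ?fast + integral\<^sup>L \<gamma> ?slow = 0"
    by simp
  with \<open>\<epsilon> \<noteq> 0\<close> show ?thesis by (simp add: field_simps)
qed

lemma A_di_weak_star_closed:
  fixes g :: "'u::metric_space \<Rightarrow> real^'m \<Rightarrow> real^'n \<Rightarrow> real^'n"
  assumes gc: "continuous_on (U \<times> Y \<times> Z) (\<lambda>(u,y,z). g u y z)"
    and \<gamma>s: "\<And>k. \<gamma>s k \<in> A_di U Y Z g C z0" and lim: "weak_star_conv (U \<times> Y \<times> Z) \<gamma>s \<gamma>"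
    and \<gamma>: "\<gamma> \<in> probs (U \<times> Y \<times> Z)"
  shows "\<gamma> \<in> A_di U Y Z g C z0"
proof -
  have "integral\<^sup>L \<gamma> (\<lambda>(u,y,z). frechet_derivative \<psi> (at z) (g u y z) + C * (\<psi> z0 - \<psi> z)) = 0"
    if \<psi>: "C1_fun \<psi>" for \<psi>
  proof (rule weak_star_conv_integral_limit[OF lim])
    show "continuous_on (U \<times> Y \<times> Z) (\<lambda>(u,y,z). frechet_derivative \<psi> (at z) (g u y z) + C * (\<psi> z0 - \<psi> z))"
      using gc unfolding case_prod_beta
      by (auto intro!: continuous_intros continuous_on_C1_fun_compose[OF \<psi>]
          continuous_on_frechet_derivative_C1[OF \<psi>])
    show "(\<lambda>k. integral\<^sup>L (\<gamma>s k) (\<lambda>(u,y,z). frechet_derivative \<psi> (at z) (g u y z) + C * (\<psi> z0 - \<psi> z))) \<longlonglongrightarrow> 0"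
      using \<gamma>s \<psi> unfolding A_di_def by simp
  qed
  with \<gamma> show ?thesis unfolding A_di_def by blast
qed

lemma D_di_limit_in_D_set:
  fixes U :: "'u::metric_space set" and Y :: "(real^'m) set" and Z :: "(real^'n) set"
    and f :: "'u \<Rightarrow> real^'m \<Rightarrow> real^'n \<Rightarrow> real^'m"
    and g :: "'u \<Rightarrow> real^'m \<Rightarrow> real^'n \<Rightarrow> real^'n"
  assumes K: "compact (U \<times> Y \<times> Z)"
    and fc: "continuous_on (U \<times> Y \<times> Z) (\<lambda>(u,y,z). f u y z)"
    and gc: "continuous_on (U \<times> Y \<times> Z) (\<lambda>(u,y,z). g u y z)"
    and \<epsilon>s: "\<And>k. \<epsilon>s k > 0" "\<epsilon>s \<longlonglongrightarrow> 0" and \<gamma>s: "\<And>k. \<gamma>s k \<in> D_di U Y Z f g C (\<epsilon>s k) y0 z0"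
    and lim: "weak_star_conv (U \<times> Y \<times> Z) \<gamma>s \<gamma>" and \<gamma>: "\<gamma> \<in> probs (U \<times> Y \<times> Z)"
  shows "\<gamma> \<in> D_set U Y Z f"
proof -
  have "integral\<^sup>L \<gamma> (\<lambda>(u,y,z). \<psi> z * frechet_derivative \<phi> (at y) (f u y z)) = 0"
    if \<phi>: "C1_fun \<phi>" and \<psi>: "C1_fun \<psi>" for \<phi> \<psi>
  proof (rule weak_star_conv_integral_limit[OF lim])
    let ?slow = "\<lambda>(u,y,z). \<phi> y * frechet_derivative \<psi> (at z) (g u y z) + C * (\<phi> y0 * \<psi> z0 - \<phi> y * \<psi> z)"
    show "continuous_on (U \<times> Y \<times> Z) (\<lambda>(u,y,z). \<psi> z * frechet_derivative \<phi> (at y) (f u y z))"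
      using fc unfolding case_prod_beta
      by (auto intro!: continuous_intros continuous_on_C1_fun_compose[OF \<psi>]
          continuous_on_frechet_derivative_C1[OF \<phi>])
    have "continuous_on (U \<times> Y \<times> Z) ?slow"
      using gc unfolding case_prod_beta
      by (auto intro!: continuous_intros continuous_on_C1_fun_compose[OF \<phi>]
          continuous_on_C1_fun_compose[OF \<psi>] continuous_on_frechet_derivative_C1[OF \<psi>])
    then have "(\<lambda>k. - \<epsilon>s k * integral\<^sup>L (\<gamma>s k) ?slow) \<longlonglongrightarrow> - 0 * integral\<^sup>L \<gamma> ?slow"
      using lim \<epsilon>s(2) unfolding weak_star_conv_def by (intro tendsto_intros) auto
    moreover have "\<epsilon>s k \<noteq> 0" for k using \<epsilon>s(1) by (metis less_irrefl)
    ultimately show "(\<lambda>k. integral\<^sup>L (\<gamma>s k) (\<lambda>(u,y,z). \<psi> z * frechet_derivative \<phi> (at y) (f u y z))) \<longlonglongrightarrow> 0"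
      using D_di_fast_integral[OF K fc gc \<gamma>s _ \<phi> \<psi>] by simp
  qed
  with \<gamma> show ?thesis unfolding D_set_def by blast
qed

lemma limsup_D_di_subset:
  fixes U :: "'u::metric_space set" and Y :: "(real^'m) set" and Z :: "(real^'n) set"
    and f :: "'u \<Rightarrow> real^'m \<Rightarrow> real^'n \<Rightarrow> real^'m"
    and g :: "'u \<Rightarrow> real^'m \<Rightarrow> real^'n \<Rightarrow> real^'n"
  assumes K: "compact (U \<times> Y \<times> Z)"
    and fc: "continuous_on (U \<times> Y \<times> Z) (\<lambda>(u,y,z). f u y z)"
    and gc: "continuous_on (U \<times> Y \<times> Z) (\<lambda>(u,y,z). g u y z)"
  shows "limsup_D_di U Y Z f g C y0 z0 \<subseteq> D_set U Y Z f \<inter> A_di U Y Z g C z0"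
proof
  fix \<gamma> assume "\<gamma> \<in> limsup_D_di U Y Z f g C y0 z0"
  then obtain \<epsilon>s \<gamma>s where \<gamma>: "\<gamma> \<in> probs (U \<times> Y \<times> Z)" and \<epsilon>s: "\<forall>k. \<epsilon>s k > 0" "\<epsilon>s \<longlonglongrightarrow> 0"
    and \<gamma>s: "\<forall>k. \<gamma>s k \<in> D_di U Y Z f g C (\<epsilon>s k) y0 z0"
    and lim: "weak_star_conv (U \<times> Y \<times> Z) \<gamma>s \<gamma>"
    unfolding limsup_D_di_def by blast
  have "\<gamma> \<in> D_set U Y Z f"
    using D_di_limit_in_D_set[OF K fc gc _ \<epsilon>s(2) _ lim \<gamma>] \<epsilon>s(1) \<gamma>s by blast
  moreover have "\<gamma> \<in> A_di U Y Z g C z0"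
    using A_di_weak_star_closed[OF gc _ lim \<gamma>] \<gamma>s D_di_subset_A_di by blast
  ultimately show "\<gamma> \<in> D_set U Y Z f \<inter> A_di U Y Z g C z0" by blast
qed

lemma compact_separating_open_sequence:
  fixes K :: "'a::metric_space set"
  assumes "compact K"
  obtains S :: "nat \<Rightarrow> 'a set" where "\<And>j. open (S j)"
    "\<And>e. e > 0 \<Longrightarrow> \<exists>i. \<forall>x\<in>K. \<forall>x'\<in>K. (\<forall>j\<le>i. (x \<in> S j \<longleftrightarrow> x' \<in> S j)) \<longrightarrow> dist x x' < e"
proof -
  have "\<exists>xs. K \<subseteq> (\<Union>x\<in>set xs. ball x (1 / real (Suc m)))" for m
  proof -
    have "K \<subseteq> \<Union>((\<lambda>x. ball x (1 / real (Suc m))) ` K)" by auto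
    then obtain F where "F \<subseteq> K" "finite F" "K \<subseteq> \<Union>((\<lambda>x. ball x (1 / real (Suc m))) ` F)"
      using compactE_image[OF assms, of K "\<lambda>x. ball x (1 / real (Suc m))"] by auto
    moreover obtain xs where "set xs = F" using finite_list[OF \<open>finite F\<close>] by blast
    ultimately show ?thesis by auto
  qed
  then obtain ps where ps: "\<And>m. K \<subseteq> (\<Union>x\<in>set (ps m). ball x (1 / real (Suc m)))" by metis
  define S where "S j = (case prod_decode j of (m,l) \<Rightarrow>
      if l < length (ps m) then ball (ps m ! l) (1 / real (Suc m)) else {})" for j
  have "open (S j)" for j unfolding S_def by (auto split: prod.split)
  moreover have "\<exists>i. \<forall>x\<in>K. \<forall>x'\<in>K. (\<forall>j\<le>i. (x \<in> S j \<longleftrightarrow> x' \<in> S j)) \<longrightarrow> dist x x' < e" if "e > 0" for e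
  proof -
    obtain m where m: "inverse (real (Suc m)) < e / 2" using reals_Archimedean[of "e/2"] \<open>e > 0\<close> by auto
    define i where "i = (\<Sum>l<length (ps m). prod_encode (m,l))"
    show ?thesis
    proof (intro exI ballI impI)
      fix x x' assume x: "x \<in> K" and x': "x' \<in> K" and ag: "\<forall>j\<le>i. (x \<in> S j \<longleftrightarrow> x' \<in> S j)"
      obtain p where p: "p \<in> set (ps m)" "x \<in> ball p (1 / real (Suc m))" using ps[of m] x by blast
      obtain l where l0: "l < length (ps m)" "ps m ! l = p" using p(1) by (metis in_set_conv_nth)
      have l: "l < length (ps m)" "x \<in> ball (ps m ! l) (1 / real (Suc m))" using l0 p by auto
      have le: "prod_encode (m,l) \<le> i" unfolding i_def
        by (rule member_le_sum) (use l in auto)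
      have "x \<in> S (prod_encode (m,l))" using l unfolding S_def by simp
      then have "x' \<in> S (prod_encode (m,l))" using ag le by blast
      then have "x' \<in> ball (ps m ! l) (1 / real (Suc m))" using l unfolding S_def by simp
      have "dist x x' < 2 / real (Suc m)"
      proof -
        have "dist x x' \<le> dist (ps m ! l) x + dist (ps m ! l) x'" by (rule dist_triangle3)
        moreover have "dist (ps m ! l) x < 1 / real (Suc m)" "dist (ps m ! l) x' < 1 / real (Suc m)"
          using l(2) \<open>x' \<in> ball (ps m ! l) (1 / real (Suc m))\<close> by auto
        ultimately show ?thesis by simp
      qed
      also have "\<dots> < e" using m by (simp add: field_simps)
      finally show "dist x x' < e" .
    qed
  qed
  ultimately show ?thesis using that by blast
qed

definition ternary_digit :: "(nat \<Rightarrow> bool) \<Rightarrow> nat \<Rightarrow> real" where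
  "ternary_digit a j = (if a j then 2 else 0) / 3 ^ Suc j"

definition ternary_code :: "(nat \<Rightarrow> bool) \<Rightarrow> real" where
  "ternary_code a = (\<Sum>j. ternary_digit a j)"

lemma ternary_digit_bounds: "0 \<le> ternary_digit a j" "ternary_digit a j \<le> 2 / 3 ^ Suc j"
  unfolding ternary_digit_def by auto

lemma ternary_tail_bounds:
  shows summable_ternary_tail: "summable (\<lambda>n. ternary_digit a (n + k))"
    and ternary_tail_nonneg: "0 \<le> (\<Sum>n. ternary_digit a (n + k))"
    and ternary_tail_le: "(\<Sum>n. ternary_digit a (n + k)) \<le> 1 / 3 ^ k"
proof -
  have geom: "(\<lambda>n. 2 / 3 ^ Suc k * (1/3) ^ n) sums (2 / 3 ^ Suc k * (1 / (1 - 1/3)) :: real)"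
    by (intro sums_mult geometric_sums) simp
  have le: "ternary_digit a (n + k) \<le> 2 / 3 ^ Suc k * (1/3) ^ n" for n
    using ternary_digit_bounds(2)[of a "n + k"] by (simp add: power_add power_divide ac_simps)
  show "summable (\<lambda>n. ternary_digit a (n + k))"
    by (rule summable_comparison_test'[OF sums_summable[OF geom], of 0])
      (use le ternary_digit_bounds(1) in auto)
  then show "0 \<le> (\<Sum>n. ternary_digit a (n + k))" using ternary_digit_bounds(1) by (rule suminf_nonneg)
  have "(\<Sum>n. ternary_digit a (n + k)) \<le> 2 / 3 ^ Suc k * (1 / (1 - 1/3))"
    using suminf_le[OF le \<open>summable _\<close> sums_summable[OF geom]] sums_unique[OF geom] by simp
  then show "(\<Sum>n. ternary_digit a (n + k)) \<le> 1 / 3 ^ k" by simp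
qed

lemma ternary_code_split:
  "ternary_code a = (\<Sum>j<k. ternary_digit a j) + ternary_digit a k + (\<Sum>n. ternary_digit a (n + Suc k))"
proof -
  have "ternary_code a = (\<Sum>n. ternary_digit a (n + k)) + (\<Sum>j<k. ternary_digit a j)"
    unfolding ternary_code_def
    by (rule suminf_split_initial_segment) (use summable_ternary_tail[of a 0] in simp)
  also have "(\<Sum>n. ternary_digit a (n + k)) = (\<Sum>n. ternary_digit a (n + Suc k)) + ternary_digit a k"
    using suminf_split_head[OF summable_ternary_tail[of a k]] by simp
  finally show ?thesis by simp
qed

lemma ternary_code_bounds: "ternary_code a \<in> {0..1}"
  using ternary_tail_nonneg[of a 0] ternary_tail_le[of a 0] by (simp add: ternary_code_def)

lemma ternary_code_gap:
  assumes "a i \<noteq> b i" "\<forall>j<i. a j = b j"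
  shows "1 / 3 ^ Suc i \<le> \<bar>ternary_code a - ternary_code b\<bar>"
proof -
  have "(\<Sum>j<i. ternary_digit a j) = (\<Sum>j<i. ternary_digit b j)"
    using assms(2) by (simp add: ternary_digit_def)
  moreover have "\<bar>ternary_digit a i - ternary_digit b i\<bar> = 2 / 3 ^ Suc i"
    using assms(1) by (auto simp: ternary_digit_def)
  ultimately show ?thesis
    using ternary_code_split[of a i] ternary_code_split[of b i]
      ternary_tail_nonneg[of a "Suc i"] ternary_tail_le[of a "Suc i"]
      ternary_tail_nonneg[of b "Suc i"] ternary_tail_le[of b "Suc i"] by linarith
qed

lemma ternary_code_agree:
  assumes "\<bar>ternary_code a - ternary_code b\<bar> < 1 / 3 ^ Suc i"
  shows "\<forall>j\<le>i. a j = b j"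
proof (rule ccontr)
  assume "\<not> (\<forall>j\<le>i. a j = b j)"
  then obtain j where j: "j \<le> i" "a j \<noteq> b j" "\<forall>k<j. a k = b k"
    using ex_least_nat_le[of "\<lambda>j. a j \<noteq> b j"] by (metis (mono_tags, lifting) le_less_trans less_imp_le_nat not_le)
  have "1 / 3 ^ Suc i \<le> (1 / 3 ^ Suc j :: real)"
    using j(1) by (intro divide_left_mono power_increasing) auto
  also have "\<dots> \<le> \<bar>ternary_code a - ternary_code b\<bar>" using ternary_code_gap[of a j b] j by auto
  finally show False using assms by simp
qed

lemma compact_borel_code:
  fixes K :: "'a::metric_space set"
  assumes "compact K"
  obtains c :: "'a \<Rightarrow> real" where "c \<in> borel_measurable borel" "\<And>x. c x \<in> {0..1}"
    "\<And>e. e > 0 \<Longrightarrow> \<exists>\<delta>>0. \<forall>x\<in>K. \<forall>x'\<in>K. dist (c x) (c x') < \<delta> \<longrightarrow> dist x x' < e"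
proof -
  obtain S :: "nat \<Rightarrow> 'a set" where S_open: "\<And>j. open (S j)" and
    S_sep: "\<And>e. e > 0 \<Longrightarrow> \<exists>i. \<forall>x\<in>K. \<forall>x'\<in>K. (\<forall>j\<le>i. x \<in> S j \<longleftrightarrow> x' \<in> S j) \<longrightarrow> dist x x' < e"
    using compact_separating_open_sequence[OF assms] by blast
  define c where "c x = ternary_code (\<lambda>j. x \<in> S j)" for x
  have [measurable]: "S j \<in> sets borel" for j using S_open by simp
  have "c \<in> borel_measurable borel" unfolding c_def ternary_code_def ternary_digit_def by measurable
  moreover have "c x \<in> {0..1}" for x unfolding c_def by (rule ternary_code_bounds)
  moreover have "\<exists>\<delta>>0. \<forall>x\<in>K. \<forall>x'\<in>K. dist (c x) (c x') < \<delta> \<longrightarrow> dist x x' < e" if e: "e > 0" for e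
  proof -
    obtain i where i: "\<forall>x\<in>K. \<forall>x'\<in>K. (\<forall>j\<le>i. x \<in> S j \<longleftrightarrow> x' \<in> S j) \<longrightarrow> dist x x' < e"
      using S_sep[OF e] by blast
    show ?thesis
    proof (intro exI[of _ "1 / 3 ^ Suc i"] conjI ballI impI)
      fix x x' assume "x \<in> K" "x' \<in> K" and close: "dist (c x) (c x') < 1 / 3 ^ Suc i"
      have "\<forall>j\<le>i. x \<in> S j \<longleftrightarrow> x' \<in> S j"
        using close unfolding c_def dist_real_def by (rule ternary_code_agree)
      with i \<open>x \<in> K\<close> \<open>x' \<in> K\<close> show "dist x x' < e" by blast
    qed simp
  qed
  ultimately show ?thesis using that by blast
qed

lemma closure_graph_dist_le:
  fixes c :: "'a::metric_space \<Rightarrow> 'b::metric_space"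
  assumes \<delta>: "\<forall>x\<in>K. \<forall>x'\<in>K. dist (c x) (c x') < \<delta> \<longrightarrow> dist x x' < e"
    and "(t,x) \<in> closure ((\<lambda>x. (c x, x)) ` K)" "(t',x') \<in> closure ((\<lambda>x. (c x, x)) ` K)"
    and "dist t t' < \<delta>"
  shows "dist x x' \<le> e"
proof -
  define P :: "(('b \<times> 'a) \<times> ('b \<times> 'a)) set"
    where "P = {z. dist (snd (fst z)) (snd (snd z)) \<le> e} \<union> {z. \<delta> \<le> dist (fst (fst z)) (fst (snd z))}"
  have "closed P" unfolding P_def
    by (intro closed_Un closed_Collect_le continuous_intros)
  moreover have "(\<lambda>x. (c x, x)) ` K \<times> (\<lambda>x. (c x, x)) ` K \<subseteq> P"
  proof
    fix z assume "z \<in> (\<lambda>x. (c x, x)) ` K \<times> (\<lambda>x. (c x, x)) ` K"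
    then obtain x x' where x: "x \<in> K" "x' \<in> K" and z: "z = ((c x, x), (c x', x'))" by blast
    show "z \<in> P" using \<delta>[rule_format, OF x] unfolding z P_def by (auto simp: not_less)
  qed
  ultimately have "closure ((\<lambda>x. (c x, x)) ` K \<times> (\<lambda>x. (c x, x)) ` K) \<subseteq> P"
    by (intro closure_minimal)
  then have "closure ((\<lambda>x. (c x, x)) ` K) \<times> closure ((\<lambda>x. (c x, x)) ` K) \<subseteq> P"
    by (simp only: closure_Times)
  with assms(2-4) show ?thesis unfolding P_def by force
qed

lemma ex_in_closure_graph:
  fixes c :: "'a::metric_space \<Rightarrow> 'b::metric_space"
  assumes K: "compact K" and t: "t \<in> closure (c ` K)"
  shows "\<exists>x\<in>K. (t,x) \<in> closure ((\<lambda>x. (c x, x)) ` K)"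
proof -
  obtain ys where ys: "\<forall>n. ys n \<in> c ` K" "ys \<longlonglongrightarrow> t"
    using t unfolding closure_sequential by blast
  then have "\<forall>n. \<exists>x. x \<in> K \<and> ys n = c x" by blast
  then obtain xs where xs_ys: "\<forall>n. xs n \<in> K \<and> ys n = c (xs n)" by metis
  then have "(\<lambda>n. c (xs n)) = ys" by auto
  with xs_ys ys have xs: "\<And>n. xs n \<in> K" "(\<lambda>n. c (xs n)) \<longlonglongrightarrow> t" by auto
  obtain x r where "x \<in> K" "strict_mono r" "(xs \<circ> r) \<longlonglongrightarrow> x"
    using seq_compactE[OF compact_imp_seq_compact[OF K], of xs] xs(1) by blast
  then have "(\<lambda>n. (c (xs (r n)), xs (r n))) \<longlonglongrightarrow> (t, x)"
    using LIMSEQ_subseq_LIMSEQ[OF xs(2)] by (intro tendsto_Pair) (auto simp: o_def)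
  moreover have "(c (xs (r n)), xs (r n)) \<in> (\<lambda>x. (c x, x)) ` K" for n using xs(1) by blast
  ultimately have "(t, x) \<in> closure ((\<lambda>x. (c x, x)) ` K)"
    unfolding closure_sequential by (intro exI[of _ "\<lambda>n. (c (xs (r n)), xs (r n))"]) auto
  with \<open>x \<in> K\<close> show ?thesis by blast
qed

lemma continuous_inverse_on_closure_image:
  fixes c :: "'a::metric_space \<Rightarrow> 'b::metric_space"
  assumes K: "compact K"
    and sep: "\<And>e. e > 0 \<Longrightarrow> \<exists>\<delta>>0. \<forall>x\<in>K. \<forall>x'\<in>K. dist (c x) (c x') < \<delta> \<longrightarrow> dist x x' < e"
  obtains d where "continuous_on (closure (c ` K)) d" "d ` closure (c ` K) \<subseteq> K"
    "\<And>x. x \<in> K \<Longrightarrow> d (c x) = x"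
proof -
  define \<Gamma> where "\<Gamma> = (\<lambda>x. (c x, x)) ` K"
  have unique: "x = x'" if tx: "(t,x) \<in> closure \<Gamma>" and tx': "(t,x') \<in> closure \<Gamma>" for t x x'
  proof -
    have "dist x x' \<le> e" if e: "e > 0" for e
    proof -
      obtain \<delta> where "\<delta> > 0" and \<delta>: "\<forall>x\<in>K. \<forall>x'\<in>K. dist (c x) (c x') < \<delta> \<longrightarrow> dist x x' < e"
        using sep[OF e] by blast
      then show ?thesis
        using closure_graph_dist_le[OF \<delta> tx[unfolded \<Gamma>_def] tx'[unfolded \<Gamma>_def]] by simp
    qed
    then show ?thesis using field_le_epsilon[of "dist x x'" 0] by simp
  qed
  define d where "d t = (SOME x. x \<in> K \<and> (t,x) \<in> closure \<Gamma>)" for t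
  have d: "d t \<in> K" "(t, d t) \<in> closure \<Gamma>" if "t \<in> closure (c ` K)" for t
    using someI_ex[OF ex_in_closure_graph[OF K that, unfolded Bex_def]] unfolding d_def \<Gamma>_def by auto
  have "continuous_on (closure (c ` K)) d"
    unfolding continuous_on_iff
  proof (intro ballI allI impI)
    fix t e assume t: "t \<in> closure (c ` K)" and "(0::real) < e"
    then obtain \<delta> where "\<delta> > 0" and \<delta>: "\<forall>x\<in>K. \<forall>x'\<in>K. dist (c x) (c x') < \<delta> \<longrightarrow> dist x x' < e/2"
      using sep[of "e/2"] by auto
    show "\<exists>\<delta>>0. \<forall>t'\<in>closure (c ` K). dist t' t < \<delta> \<longrightarrow> dist (d t') (d t) < e"
    proof (intro exI[of _ \<delta>] conjI ballI impI)
      fix t' assume "t' \<in> closure (c ` K)" "dist t' t < \<delta>"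
      then have "dist (d t') (d t) \<le> e/2"
        using closure_graph_dist_le[OF \<delta> d(2)[unfolded \<Gamma>_def] d(2)[OF t, unfolded \<Gamma>_def]] by blast
      with \<open>0 < e\<close> show "dist (d t') (d t) < e" by simp
    qed (rule \<open>\<delta> > 0\<close>)
  qed
  moreover have "d ` closure (c ` K) \<subseteq> K" using d(1) by blast
  moreover have "d (c x) = x" if x: "x \<in> K" for x
  proof -
    have "c x \<in> closure (c ` K)" by (rule closure_subset[THEN subsetD], rule imageI[OF x])
    moreover have "(c x, x) \<in> closure \<Gamma>"
      unfolding \<Gamma>_def by (rule closure_subset[THEN subsetD], rule image_eqI[OF refl x])
    ultimately show ?thesis by (rule unique[OF d(2)])
  qed
  ultimately show ?thesis using that by blast
qed

lemma weak_conv_m_AE_closed: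
  assumes \<mu>: "\<And>n. real_distribution (\<mu> n)" and M: "real_distribution M"
    and lim: "weak_conv_m \<mu> M" and Q: "closed Q" "Q \<noteq> {}"
    and supp: "\<And>n. AE t in \<mu> n. t \<in> Q"
  shows "AE t in M. t \<in> Q"
proof -
  interpret M: real_distribution M by (rule M)
  define F where "F t = min 1 (infdist t Q)" for t
  have F_cont: "isCont F t" for t unfolding F_def by (intro continuous_intros)
  have F_bound: "norm (F t) \<le> 1" for t unfolding F_def using infdist_nonneg[of t Q] by auto
  have "integral\<^sup>L (\<mu> n) F = 0" for n
    using supp[of n] by (intro integral_eq_zero_AE) (auto simp: F_def)
  then have "(\<lambda>n. 0) \<longlonglongrightarrow> integral\<^sup>L M F"
    using weak_conv_imp_integral_bdd_continuous_conv[OF \<mu> M lim F_cont F_bound] by simp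
  then have "integral\<^sup>L M F = 0" using LIMSEQ_unique[OF _ tendsto_const] by blast
  moreover have "integrable M F"
    using F_bound borel_measurable_continuous_onI[OF continuous_at_imp_continuous_on[OF ballI[OF F_cont]]]
    by (intro M.integrable_const_bound[where B=1]) auto
  moreover have "AE t in M. 0 \<le> F t" unfolding F_def using infdist_nonneg by auto
  ultimately have "AE t in M. F t = 0" using integral_nonneg_eq_0_iff_AE by blast
  then show ?thesis
  proof (rule AE_mp, intro AE_I2 impI)
    fix t assume "F t = 0"
    then have "infdist t Q = 0" unfolding F_def using infdist_nonneg[of t Q] by linarith
    then show "t \<in> Q" using in_closure_iff_infdist_zero[OF Q(2)] Q(1) by simp
  qed
qed

lemma tight_probs_real:
  fixes Q :: "real set" and \<nu> :: "nat \<Rightarrow> real measure"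
  assumes Q: "compact Q" and \<nu>: "\<And>n. \<nu> n \<in> probs Q"
  shows "tight (\<lambda>n. distr (\<nu> n) borel (\<lambda>t. t))"
proof -
  have id_meas: "(\<lambda>t. t) \<in> borel_measurable (\<nu> n)" for n
    unfolding measurable_probs[OF \<nu>] by (rule borel_measurable_continuous_on_restrict[OF continuous_on_id])
  obtain q0 where q0: "q0 \<in> Q"
    using prob_space.not_empty[OF prob_space_probs[OF \<nu>]] space_probs[OF \<nu>] by blast
  obtain B where B: "\<forall>t\<in>Q. \<bar>t\<bar> \<le> B" using compact_imp_bounded[OF Q] unfolding bounded_iff by auto
  have "measure (distr (\<nu> n) borel (\<lambda>t. t)) {-B-1<..B} = 1" for n
  proof -
    have "measure (distr (\<nu> n) borel (\<lambda>t. t)) {-B-1<..B} = measure (\<nu> n) ({-B-1<..B} \<inter> space (\<nu> n))"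
      by (simp add: measure_distr[OF id_meas])
    also have "{-B-1<..B} \<inter> space (\<nu> n) = space (\<nu> n)" using B space_probs[OF \<nu>] by force
    finally show ?thesis by (simp add: prob_space.prob_space[OF prob_space_probs[OF \<nu>]])
  qed
  moreover have "real_distribution (distr (\<nu> n) borel (\<lambda>t. t))" for n
    unfolding real_distribution_def real_distribution_axioms_def
    using prob_space.prob_space_distr[OF prob_space_probs[OF \<nu>] id_meas] by simp
  ultimately show ?thesis unfolding tight_def
    using B q0 by (intro conjI allI impI exI[of _ "-B-1"] exI[of _ B]) force+
qed

lemma probs_real_Helly_selection:
  fixes Q :: "real set" and \<nu> :: "nat \<Rightarrow> real measure"
  assumes Q: "compact Q" and \<nu>: "\<And>n. \<nu> n \<in> probs Q"
  obtains r M where "strict_mono r" "real_distribution M" "AE t in M. t \<in> Q"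
    "\<And>(H :: real \<Rightarrow> real) B. continuous_on UNIV H \<Longrightarrow> (\<And>t. norm (H t) \<le> B) \<Longrightarrow>
       (\<lambda>n. integral\<^sup>L (\<nu> (r n)) H) \<longlonglongrightarrow> integral\<^sup>L M H"
proof -
  define \<nu>' where "\<nu>' n = distr (\<nu> n) borel (\<lambda>t. t)" for n
  have id_meas: "(\<lambda>t. t) \<in> borel_measurable (\<nu> n)" for n
    unfolding measurable_probs[OF \<nu>] by (rule borel_measurable_continuous_on_restrict[OF continuous_on_id])
  have tight: "tight \<nu>'" unfolding \<nu>'_def by (rule tight_probs_real[OF Q \<nu>])
  then have \<nu>': "real_distribution (\<nu>' n)" for n unfolding tight_def by blast
  obtain r M where r: "strict_mono r" and M: "real_distribution M"
    and lim: "weak_conv_m (\<nu>' \<circ> r) M"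
    using tight_imp_convergent_subsubsequence[OF tight strict_mono_id, unfolded comp_id] by blast
  have "AE t in M. t \<in> Q"
  proof (rule weak_conv_m_AE_closed[OF _ M lim compact_imp_closed[OF Q]])
    show "real_distribution ((\<nu>' \<circ> r) n)" for n using \<nu>' by simp
    show "Q \<noteq> {}" using prob_space.not_empty[OF prob_space_probs[OF \<nu>]] space_probs[OF \<nu>] by blast
    have [measurable]: "Q \<in> sets borel" using compact_imp_closed[OF Q] by simp
    show "AE t in (\<nu>' \<circ> r) n. t \<in> Q" for n
    proof -
      have "AE t in \<nu> (r n). t \<in> Q" by (intro AE_I2) (simp add: space_probs[OF \<nu>])
      moreover have "{t \<in> space borel. t \<in> Q} \<in> sets borel" by measurable
      ultimately show ?thesis unfolding \<nu>'_def o_def by (subst AE_distr_iff[OF id_meas])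
    qed
  qed
  moreover have "(\<lambda>n. integral\<^sup>L (\<nu> (r n)) H) \<longlonglongrightarrow> integral\<^sup>L M H"
    if H: "continuous_on UNIV H" "\<And>t. norm (H t) \<le> B" for H :: "real \<Rightarrow> real" and B
  proof -
    have "integral\<^sup>L (\<nu>' n) H = integral\<^sup>L (\<nu> n) H" for n
      unfolding \<nu>'_def by (rule integral_distr[OF id_meas borel_measurable_continuous_onI[OF H(1)]])
    then show ?thesis
      using weak_conv_imp_integral_bdd_continuous_conv[OF _ M lim, of H B] \<nu>' H
      by (simp add: continuous_on_eq_continuous_at)
  qed
  ultimately show ?thesis using r M that by blast
qed

lemma compact_real_bounded_continuous_extension:
  fixes Q :: "real set" and h :: "real \<Rightarrow> real"
  assumes Q: "compact Q" "Q \<noteq> {}" and h: "continuous_on Q h"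
  obtains H B where "continuous_on UNIV H" "\<And>t. t \<in> Q \<Longrightarrow> H t = h t" "\<And>t. norm (H t) \<le> B"
proof -
  obtain B where B: "\<forall>t\<in>Q. norm (h t) \<le> B"
    using compact_imp_bounded[OF compact_continuous_image[OF h Q(1)]] unfolding bounded_iff by auto
  obtain q where "q \<in> Q" using Q(2) by blast
  with B have B0: "0 \<le> B" using norm_ge_zero order_trans by blast
  have "closedin (top_of_set UNIV) Q" using compact_imp_closed[OF Q(1)] by simp
  then obtain H where "continuous_on UNIV H" "\<And>t. t \<in> Q \<Longrightarrow> H t = h t" "\<And>t. t \<in> UNIV \<Longrightarrow> norm (H t) \<le> B"
    by (rule Tietze[OF h _ B0]) (use B in auto)
  then show ?thesis using that[of H B] by blast
qed

lemma probs_real_seq_compact: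
  fixes Q :: "real set" and \<nu> :: "nat \<Rightarrow> real measure"
  assumes Q: "compact Q" and \<nu>: "\<And>n. \<nu> n \<in> probs Q"
  obtains r \<mu> where "strict_mono r" "\<mu> \<in> probs Q" "weak_star_conv Q (\<nu> \<circ> r) \<mu>"
proof -
  obtain r M where r: "strict_mono r" and M: "real_distribution M" and AE_Q: "AE t in M. t \<in> Q"
    and lim: "\<And>(H :: real \<Rightarrow> real) B. continuous_on UNIV H \<Longrightarrow> (\<And>t. norm (H t) \<le> B) \<Longrightarrow>
       (\<lambda>n. integral\<^sup>L (\<nu> (r n)) H) \<longlonglongrightarrow> integral\<^sup>L M H"
    by (rule probs_real_Helly_selection[of Q \<nu>, OF Q \<nu>]) blast
  interpret M: real_distribution M by (rule M)
  obtain q0 where q0: "q0 \<in> Q"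
    using prob_space.not_empty[OF prob_space_probs[OF \<nu>]] space_probs[OF \<nu>] by blast
  have [measurable]: "Q \<in> sets borel" using compact_imp_closed[OF Q] by simp
  \<comment> \<open>the limit \<open>M\<close> is carried by \<open>Q\<close>; moving its null set outside \<open>Q\<close> to \<open>q0\<close> makes it a measure on \<open>Q\<close>\<close>
  define \<rho> where "\<rho> t = (if t \<in> Q then t else q0)" for t
  have "\<rho> \<in> measurable borel (restrict_space borel Q)"
  proof (rule measurable_restrict_space2)
    show "\<rho> \<in> borel_measurable borel" unfolding \<rho>_def by measurable
  qed (auto simp: \<rho>_def q0)
  then have \<rho>_meas: "\<rho> \<in> measurable M (restrict_space borel Q)"
    using measurable_cong_sets[OF M.events_eq_borel refl] by blast
  define \<mu> where "\<mu> = distr M (restrict_space borel Q) \<rho>"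
  have "\<mu> \<in> probs Q" unfolding probs_def \<mu>_def using M.prob_space_distr[OF \<rho>_meas] by simp
  moreover have "weak_star_conv Q (\<nu> \<circ> r) \<mu>"
    unfolding weak_star_conv_def
  proof (intro allI impI)
    fix h :: "real \<Rightarrow> real" assume h: "continuous_on Q h"
    obtain H B where H: "continuous_on UNIV H" "\<And>t. t \<in> Q \<Longrightarrow> H t = h t" "\<And>t. norm (H t) \<le> B"
      using compact_real_bounded_continuous_extension[OF Q _ h] q0 by blast
    have h_meas: "h \<in> borel_measurable (restrict_space borel Q)"
      by (rule borel_measurable_continuous_on_restrict[OF h])
    have "integral\<^sup>L ((\<nu> \<circ> r) n) h = integral\<^sup>L (\<nu> (r n)) H" for n
      by (auto intro: Bochner_Integration.integral_cong simp: space_probs[OF \<nu>] H(2))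
    moreover have "integral\<^sup>L \<mu> h = integral\<^sup>L M H"
    proof -
      have "integral\<^sup>L \<mu> h = integral\<^sup>L M (\<lambda>t. h (\<rho> t))"
        unfolding \<mu>_def by (rule integral_distr[OF \<rho>_meas h_meas])
      also have "\<dots> = integral\<^sup>L M H"
      proof (rule integral_cong_AE)
        show "(\<lambda>t. h (\<rho> t)) \<in> borel_measurable M"
          using measurable_compose[OF \<rho>_meas h_meas] .
        show "H \<in> borel_measurable M"
          using borel_measurable_continuous_onI[OF H(1)] by simp
        show "AE t in M. h (\<rho> t) = H t" using AE_Q by eventually_elim (simp add: \<rho>_def H(2))
      qed
      finally show ?thesis .
    qed
    ultimately show "(\<lambda>n. integral\<^sup>L ((\<nu> \<circ> r) n) h) \<longlonglongrightarrow> integral\<^sup>L \<mu> h"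
      using lim[OF H(1,3)] by simp
  qed
  ultimately show ?thesis using r that by blast
qed

lemma distr_probs:
  assumes "\<gamma> \<in> probs K" "c \<in> measurable (restrict_space borel K) (restrict_space borel Q)"
  shows "distr \<gamma> (restrict_space borel Q) c \<in> probs Q"
  using prob_space.prob_space_distr[OF prob_space_probs[OF assms(1)]] assms(2)
  unfolding probs_def measurable_probs[OF assms(1)] by simp

lemma measurable_restrict_space_continuous_on:
  assumes "continuous_on Q d" "d ` Q \<subseteq> K"
  shows "d \<in> measurable (restrict_space borel Q) (restrict_space borel K)"
  by (rule measurable_restrict_space2)
    (use assms borel_measurable_continuous_on_restrict[OF assms(1)] in \<open>auto simp: space_restrict_space\<close>)

lemma weak_star_conv_distr_left_inverse:
  assumes \<gamma>s: "\<And>n. \<gamma>s n \<in> probs K" and \<mu>: "\<mu> \<in> probs Q"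
    and c: "c \<in> measurable (restrict_space borel K) (restrict_space borel Q)"
    and d: "continuous_on Q d" "d ` Q \<subseteq> K" "\<And>x. x \<in> K \<Longrightarrow> d (c x) = x"
    and lim: "weak_star_conv Q (\<lambda>n. distr (\<gamma>s n) (restrict_space borel Q) c) \<mu>"
  shows "weak_star_conv K \<gamma>s (distr \<mu> (restrict_space borel K) d)"
  unfolding weak_star_conv_def
proof (intro allI impI)
  fix h :: "'a \<Rightarrow> real" assume h: "continuous_on K h"
  have hd: "continuous_on Q (\<lambda>t. h (d t))"
    using continuous_on_compose[OF d(1) continuous_on_subset[OF h d(2)]] by (simp add: o_def)
  have c_meas: "c \<in> measurable (\<gamma>s n) (restrict_space borel Q)" for n
    using c unfolding measurable_probs[OF \<gamma>s] .
  have d_meas: "d \<in> measurable \<mu> (restrict_space borel K)"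
    using measurable_restrict_space_continuous_on[OF d(1,2)] unfolding measurable_probs[OF \<mu>] .
  have "integral\<^sup>L (distr (\<gamma>s n) (restrict_space borel Q) c) (\<lambda>t. h (d t)) = integral\<^sup>L (\<gamma>s n) h" for n
  proof -
    have "integral\<^sup>L (distr (\<gamma>s n) (restrict_space borel Q) c) (\<lambda>t. h (d t))
        = integral\<^sup>L (\<gamma>s n) (\<lambda>x. h (d (c x)))"
      by (rule integral_distr[OF c_meas borel_measurable_continuous_on_restrict[OF hd]])
    also have "\<dots> = integral\<^sup>L (\<gamma>s n) h"
      by (rule Bochner_Integration.integral_cong) (simp_all add: space_probs[OF \<gamma>s] d(3))
    finally show ?thesis .
  qed
  moreover have "integral\<^sup>L \<mu> (\<lambda>t. h (d t)) = integral\<^sup>L (distr \<mu> (restrict_space borel K) d) h"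
    by (rule integral_distr[OF d_meas borel_measurable_continuous_on_restrict[OF h], symmetric])
  moreover have "(\<lambda>n. integral\<^sup>L (distr (\<gamma>s n) (restrict_space borel Q) c) (\<lambda>t. h (d t)))
      \<longlonglongrightarrow> integral\<^sup>L \<mu> (\<lambda>t. h (d t))"
    using lim hd unfolding weak_star_conv_def by blast
  ultimately show "(\<lambda>n. integral\<^sup>L (\<gamma>s n) h) \<longlonglongrightarrow> integral\<^sup>L (distr \<mu> (restrict_space borel K) d) h"
    by simp
qed

lemma probs_seq_compact:
  fixes K :: "'a::metric_space set" and \<gamma>s :: "nat \<Rightarrow> 'a measure"
  assumes K: "compact K" and \<gamma>s: "\<And>n. \<gamma>s n \<in> probs K"
  obtains r \<gamma> where "strict_mono r" "\<gamma> \<in> probs K" "weak_star_conv K (\<gamma>s \<circ> r) \<gamma>"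
proof -
  obtain c :: "'a \<Rightarrow> real" where c_meas: "c \<in> borel_measurable borel" and c01: "\<And>x. c x \<in> {0..1}"
    and c_sep: "\<And>e. e > 0 \<Longrightarrow> \<exists>\<delta>>0. \<forall>x\<in>K. \<forall>x'\<in>K. dist (c x) (c x') < \<delta> \<longrightarrow> dist x x' < e"
    by (rule compact_borel_code[OF K]) blast
  define Q where "Q = closure (c ` K)"
  obtain d where d: "continuous_on Q d" "d ` Q \<subseteq> K" "\<And>x. x \<in> K \<Longrightarrow> d (c x) = x"
    using continuous_inverse_on_closure_image[OF K c_sep] unfolding Q_def by auto
  have "bounded (c ` K)" using c01 by (intro bounded_subset[OF bounded_cbox[of 0 1]]) auto
  then have Q: "compact Q" unfolding Q_def by (simp add: compact_closure)
  have c: "c \<in> measurable (restrict_space borel K) (restrict_space borel Q)"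
  proof (rule measurable_restrict_space2)
    show "c \<in> borel_measurable (restrict_space borel K)" by (rule measurable_restrict_space1[OF c_meas])
    show "c \<in> space (restrict_space borel K) \<rightarrow> Q"
    proof
      fix x assume "x \<in> space (restrict_space borel K)"
      then have "x \<in> K" by (simp add: space_restrict_space)
      then show "c x \<in> Q" unfolding Q_def by (rule closure_subset[THEN subsetD, OF imageI])
    qed
  qed
  define \<nu> where "\<nu> n = distr (\<gamma>s n) (restrict_space borel Q) c" for n
  have \<nu>: "\<nu> n \<in> probs Q" for n unfolding \<nu>_def by (rule distr_probs[OF \<gamma>s c])
  obtain r \<mu> where r: "strict_mono r" and \<mu>: "\<mu> \<in> probs Q" and lim: "weak_star_conv Q (\<nu> \<circ> r) \<mu>"
    by (rule probs_real_seq_compact[of Q \<nu>, OF Q \<nu>]) blast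
  have "distr \<mu> (restrict_space borel K) d \<in> probs K"
    by (rule distr_probs[OF \<mu> measurable_restrict_space_continuous_on[OF d(1,2)]])
  moreover have "weak_star_conv K (\<gamma>s \<circ> r) (distr \<mu> (restrict_space borel K) d)"
    using lim unfolding \<nu>_def o_def by (intro weak_star_conv_distr_left_inverse[OF \<gamma>s \<mu> c d])
  ultimately show ?thesis using r that by blast
qed

lemma Liminf_at_right_0_less_sequence:
  fixes F :: "real \<Rightarrow> 'b::complete_linorder"
  assumes "Liminf (at_right 0) F < c"
  obtains \<epsilon>s where "\<And>k. 0 < \<epsilon>s k" "\<epsilon>s \<longlonglongrightarrow> 0" "\<And>k. F (\<epsilon>s k) < c"
proof -
  obtain y where "y < c" and not_ev: "\<not> eventually (\<lambda>\<epsilon>. y < F \<epsilon>) (at_right 0)"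
    using assms unfolding not_le[symmetric] le_Liminf_iff by blast
  have "\<exists>\<epsilon>. 0 < \<epsilon> \<and> \<epsilon> < inverse (Suc k) \<and> F \<epsilon> \<le> y" for k
    using not_ev unfolding eventually_at_right_field
    by (metis inverse_positive_iff_positive not_le of_nat_0_less_iff zero_less_Suc)
  then obtain \<epsilon>s where \<epsilon>s: "\<And>k. 0 < \<epsilon>s k \<and> \<epsilon>s k < inverse (Suc k) \<and> F (\<epsilon>s k) \<le> y"
    by metis
  have "\<epsilon>s \<longlonglongrightarrow> 0"
  proof (rule tendsto_sandwich[OF _ _ tendsto_const LIMSEQ_inverse_real_of_nat])
    show "\<forall>\<^sub>F k in sequentially. 0 \<le> \<epsilon>s k" "\<forall>\<^sub>F k in sequentially. \<epsilon>s k \<le> inverse (Suc k)"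
      using \<epsilon>s by (simp_all add: less_imp_le)
  qed
  moreover have "F (\<epsilon>s k) < c" for k using \<epsilon>s \<open>y < c\<close> by (meson le_less_trans)
  ultimately show ?thesis using that \<epsilon>s by blast
qed

lemma limsup_D_di_seq_compact:
  assumes K: "compact (U \<times> Y \<times> Z)"
    and \<epsilon>s: "\<And>k. 0 < \<epsilon>s k" "\<epsilon>s \<longlonglongrightarrow> 0"
    and \<gamma>s: "\<And>k. \<gamma>s k \<in> D_di U Y Z f g C (\<epsilon>s k) y0 z0"
  obtains r \<gamma> where "strict_mono r" "\<gamma> \<in> limsup_D_di U Y Z f g C y0 z0"
    "weak_star_conv (U \<times> Y \<times> Z) (\<gamma>s \<circ> r) \<gamma>"
proof -
  have \<gamma>s_probs: "\<gamma>s k \<in> probs (U \<times> Y \<times> Z)" for k using \<gamma>s unfolding D_di_def by blast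
  obtain r \<gamma> where r: "strict_mono r" and \<gamma>: "\<gamma> \<in> probs (U \<times> Y \<times> Z)"
    and lim: "weak_star_conv (U \<times> Y \<times> Z) (\<gamma>s \<circ> r) \<gamma>"
    by (rule probs_seq_compact[of _ \<gamma>s, OF K \<gamma>s_probs]) blast
  have "\<gamma> \<in> limsup_D_di U Y Z f g C y0 z0"
    unfolding limsup_D_di_def
  proof (intro CollectI conjI \<gamma> exI[of _ "\<epsilon>s \<circ> r"] exI[of _ "\<gamma>s \<circ> r"] allI lim)
    show "0 < (\<epsilon>s \<circ> r) k" for k using \<epsilon>s(1) by simp
    show "(\<epsilon>s \<circ> r) \<longlonglongrightarrow> 0" using LIMSEQ_subseq_LIMSEQ[OF \<epsilon>s(2) r] .
    show "(\<gamma>s \<circ> r) k \<in> D_di U Y Z f g C ((\<epsilon>s \<circ> r) k) y0 z0" for k using \<gamma>s by simp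
  qed
  with r lim show ?thesis using that by blast
qed

lemma G_di_A_le_Liminf_G_di_star:
  fixes U :: "'u::metric_space set" and Y :: "(real^'m) set" and Z :: "(real^'n) set"
    and f :: "'u \<Rightarrow> real^'m \<Rightarrow> real^'n \<Rightarrow> real^'m"
    and g :: "'u \<Rightarrow> real^'m \<Rightarrow> real^'n \<Rightarrow> real^'n"
    and G :: "'u \<Rightarrow> real^'m \<Rightarrow> real^'n \<Rightarrow> real"
  assumes K: "compact (U \<times> Y \<times> Z)"
    and fc: "continuous_on (U \<times> Y \<times> Z) (\<lambda>(u,y,z). f u y z)"
    and gc: "continuous_on (U \<times> Y \<times> Z) (\<lambda>(u,y,z). g u y z)"
    and Gc: "continuous_on (U \<times> Y \<times> Z) (\<lambda>(u,y,z). G u y z)"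
  shows "G_di_A U Y Z f g G C z0 \<le> Liminf (at_right 0) (\<lambda>\<epsilon>. G_di_star U Y Z f g G C \<epsilon> y0 z0)"
proof -
  let ?G = "\<lambda>(u,y,z). G u y z"
  have "G_di_A U Y Z f g G C z0 \<le> ereal \<rho>"
    if less: "Liminf (at_right 0) (\<lambda>\<epsilon>. G_di_star U Y Z f g G C \<epsilon> y0 z0) < ereal \<rho>" for \<rho>
  proof -
    obtain \<epsilon>s where \<epsilon>s: "\<And>k. 0 < \<epsilon>s k" "\<epsilon>s \<longlonglongrightarrow> 0"
      and "\<And>k. G_di_star U Y Z f g G C (\<epsilon>s k) y0 z0 < ereal \<rho>"
      by (rule Liminf_at_right_0_less_sequence[OF less]) blast
    then have "\<exists>\<gamma>. \<gamma> \<in> D_di U Y Z f g C (\<epsilon>s k) y0 z0 \<and> integral\<^sup>L \<gamma> ?G < \<rho>" for k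
      unfolding G_di_star_def INF_less_iff by auto
    then obtain \<gamma>s where \<gamma>s: "\<And>k. \<gamma>s k \<in> D_di U Y Z f g C (\<epsilon>s k) y0 z0"
      and below: "\<And>k. integral\<^sup>L (\<gamma>s k) ?G < \<rho>" by metis
    obtain r \<gamma> where "\<gamma> \<in> limsup_D_di U Y Z f g C y0 z0" and lim: "weak_star_conv (U \<times> Y \<times> Z) (\<gamma>s \<circ> r) \<gamma>"
      by (rule limsup_D_di_seq_compact[OF K \<epsilon>s \<gamma>s]) blast
    with limsup_D_di_subset[OF K fc gc] have "G_di_A U Y Z f g G C z0 \<le> integral\<^sup>L \<gamma> ?G"
      unfolding G_di_A_def by (blast intro: INF_lower)
    also have "integral\<^sup>L \<gamma> ?G \<le> \<rho>"
      using lim Gc below unfolding weak_star_conv_def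
      by (intro LIMSEQ_le_const2[where X="\<lambda>k. integral\<^sup>L ((\<gamma>s \<circ> r) k) ?G"]) (auto intro: less_imp_le)
    finally show ?thesis by simp
  qed
  then show ?thesis by (meson ereal_dense2 not_le ereal_less_eq(3) less_le_trans)
qed

theorem proposition4p1:
  fixes U :: "'u::metric_space set" and Y :: "(real^'m) set" and Z :: "(real^'n) set"
    and f :: "'u \<Rightarrow> real^'m \<Rightarrow> real^'n \<Rightarrow> real^'m"
    and g :: "'u \<Rightarrow> real^'m \<Rightarrow> real^'n \<Rightarrow> real^'n"
    and G :: "'u \<Rightarrow> real^'m \<Rightarrow> real^'n \<Rightarrow> real"
    and C :: real and y0 :: "real^'m" and z0 :: "real^'n"
  assumes "compact U" and "compact Y" and "compact Z"
    and "continuous_on (U \<times> UNIV \<times> UNIV) (\<lambda>(u,y,z). f u y z)"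
    and "continuous_on (U \<times> UNIV \<times> UNIV) (\<lambda>(u,y,z). g u y z)"
    and "\<exists>L. \<forall>u\<in>U. \<forall>y z y' z'. dist (f u y z) (f u y' z') \<le> L * dist (y,z) (y',z')"
    and "\<exists>L. \<forall>u\<in>U. \<forall>y z y' z'. dist (g u y z) (g u y' z') \<le> L * dist (y,z) (y',z')"
    and "continuous_on (U \<times> UNIV \<times> UNIV) (\<lambda>(u,y,z). G u y z)"
    and "C > 0" and "y0 \<in> Y" and "z0 \<in> Z"
  shows "limsup_D_di U Y Z f g C y0 z0 \<subseteq> D_set U Y Z f \<inter> A_di U Y Z g C z0
     \<and> Liminf (at_right 0) (\<lambda>\<epsilon>. G_di_star U Y Z f g G C \<epsilon> y0 z0) \<ge> G_di_A U Y Z f g G C z0"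
proof -
  have K: "compact (U \<times> Y \<times> Z)" using assms(1-3) by (intro compact_Times)
  have "U \<times> Y \<times> Z \<subseteq> U \<times> UNIV \<times> UNIV" by auto
  note restrict = continuous_on_subset[OF _ this]
  show ?thesis
    using limsup_D_di_subset[OF K restrict[OF assms(4)] restrict[OF assms(5)]]
      G_di_A_le_Liminf_G_di_star[OF K restrict[OF assms(4)] restrict[OF assms(5)] restrict[OF assms(8)]]
    by simp
qed

end
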